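(* Let $K$ be a global function field, $\ell$ a rational prime coprime to the characteristic of $K$, and suppose a primitive $\ell$-th root of unity $\zeta_\ell$ lies in $K$. Let $x,d,a\in K^*$ with $dx^\ell+d^\ell\neq0$ and $a+a^{-1}\neq0$, and let $H=K\left(\sqrt[\ell]{1+d^{-1}},\sqrt[\ell]{1+(dx^\ell+d^\ell)^{-1}},\sqrt[\ell]{1+(a+a^{-1})d^{-1}}\right)$. Let $\mathfrak{p}$ be a prime of $K$ such that (i) $v_\mathfrak{p}(d)<0$; (ii) $v_\mathfrak{p}(dx^\ell)<v_\mathfrak{p}(d^\ell)$; (iii) $v_\mathfrak{p}(a)=0$ and the residue of $a$ at $\mathfrak{p}$ is not an $\ell$-th power in $\mathbb{F}_\mathfrak{p}^\times$; (iv) $v_\mathfrak{p}(d)\not\equiv0\pmod\ell$. Then for every prime $\mathfrak{q}$ of $H$ above $\mathfrak{p}$ we have $v_\mathfrak{q}(dx^\ell+d^\ell)\not\equiv0\pmod\ell$ and the residue of $a$ at $\mathfrak{q}$ is not an $\ell$-th power in $\mathbb{F}_\mathfrak{q}^\times$.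
   Context: For a prime $\mathfrak{p}$ of a global function field, $v_\mathfrak{p}$ denotes the normalized discrete valuation and $\mathbb{F}_\mathfrak{p}$ the residue field. *)

theory Defs
  imports Main "HOL-Computational_Algebra.Polynomial"
begin

text \<open>All fields live inside an ambient field of type 'a (e.g. an algebraic closure);
subfields are carrier sets.\<close>

definition is_subfield :: "'a::field set \<Rightarrow> bool" where
  "is_subfield F \<longleftrightarrow> 0 \<in> F \<and> 1 \<in> F \<and>
     (\<forall>x\<in>F. \<forall>y\<in>F. x + y \<in> F \<and> x * y \<in> F) \<and>
     (\<forall>x\<in>F. - x \<in> F \<and> inverse x \<in> F)"

definition gen_subfield :: "'a::field set \<Rightarrow> 'a set" where
  "gen_subfield S = \<Inter> {F. is_subfield F \<and> S \<subseteq> F}"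

definition prime_subfield :: "'a::field set" where
  "prime_subfield = gen_subfield {}"

definition transcendental_over :: "'a::field set \<Rightarrow> 'a \<Rightarrow> bool" where
  "transcendental_over F t \<longleftrightarrow>
     (\<forall>q::'a poly. q \<noteq> 0 \<longrightarrow> (\<forall>i. coeff q i \<in> F) \<longrightarrow> poly q t \<noteq> 0)"

definition finite_dim_over :: "'a::field set \<Rightarrow> 'a set \<Rightarrow> bool" where
  "finite_dim_over F K \<longleftrightarrow> (\<exists>B. finite B \<and> B \<subseteq> K \<and>
     (\<forall>x\<in>K. \<exists>c. (\<forall>b\<in>B. c b \<in> F) \<and> x = (\<Sum>b\<in>B. c b * b)))"

definition global_function_field :: "'a::field set \<Rightarrow> bool" where
  "global_function_field K \<longleftrightarrow> is_subfield K \<and> CHAR('a) > 0 \<and>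
     (\<exists>t\<in>K. transcendental_over prime_subfield t \<and>
        finite_dim_over (gen_subfield (insert t prime_subfield)) K)"

text \<open>Normalized discrete valuation on the subfield F (values on F - {0});
  surjectivity onto the integers = nontrivial and normalized.  For a global function
  field these are exactly the primes (places) of F.\<close>
definition normalized_valuation :: "'a::field set \<Rightarrow> ('a \<Rightarrow> int) \<Rightarrow> bool" where
  "normalized_valuation F v \<longleftrightarrow>
     (\<forall>x\<in>F - {0}. \<forall>y\<in>F - {0}. v (x * y) = v x + v y) \<and>
     (\<forall>x\<in>F - {0}. \<forall>y\<in>F - {0}. x + y \<noteq> 0 \<longrightarrow> min (v x) (v y) \<le> v (x + y)) \<and>
     v ` (F - {0}) = UNIV"

definition lies_above :: "'a::field set \<Rightarrow> ('a \<Rightarrow> int) \<Rightarrow> 'a set \<Rightarrow> ('a \<Rightarrow> int) \<Rightarrow> bool" where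
  "lies_above H w K v \<longleftrightarrow> (\<exists>e::int. e > 0 \<and> (\<forall>y\<in>K - {0}. w y = e * v y))"

definition val_ring :: "'a::field set \<Rightarrow> ('a \<Rightarrow> int) \<Rightarrow> 'a set" where
  "val_ring F v = {x\<in>F. x = 0 \<or> 0 \<le> v x}"

definition val_ideal :: "'a::field set \<Rightarrow> ('a \<Rightarrow> int) \<Rightarrow> 'a set" where
  "val_ideal F v = {x\<in>F. x = 0 \<or> 0 < v x}"

text \<open>The residue of a (a unit for v) is an n-th power in the multiplicative group of
  the residue field O/m: some unit b of O with b^n - a in m.\<close>
definition residue_is_power :: "'a::field set \<Rightarrow> ('a \<Rightarrow> int) \<Rightarrow> nat \<Rightarrow> 'a \<Rightarrow> bool" where
  "residue_is_power F v n a \<longleftrightarrow>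
     (\<exists>b\<in>val_ring F v. b \<notin> val_ideal F v \<and> b ^ n - a \<in> val_ideal F v)"

end

theory Submission
  imports Defs "HOL-Number_Theory.Residues"
begin

text \<open>Each generator of H over K is an \<open>l\<close>-th root of \<open>1 + u\<close> with \<open>v(u) > 0\<close>. Modulo \<open>\<qq>\<close> such a
  root is congruent to a power of \<open>\<zeta>\<close>, and Newton's iteration, which converges because \<open>l\<close> is a
  unit at \<open>\<qq>\<close>, approximates it arbitrarily well by elements of K. Hence H lies in the
  \<open>\<qq>\<close>-adic closure of K, so \<open>\<qq>\<close> is unramified over \<open>\<pp>\<close> with the same residue field. Both
  conclusions are then inherited from \<open>\<pp>\<close>, where \<open>v(dx\<^sup>l + d\<^sup>l) = v(d) + l v(x)\<close> by (ii).\<close>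

lemma gen_subfield_is_subfield: "is_subfield (gen_subfield S)"
  unfolding gen_subfield_def is_subfield_def by blast

lemma gen_subfield_superset: "S \<subseteq> gen_subfield S"
  unfolding gen_subfield_def by blast

lemma gen_subfield_least: "is_subfield F \<Longrightarrow> S \<subseteq> F \<Longrightarrow> gen_subfield S \<subseteq> F"
  unfolding gen_subfield_def by blast

lemma of_nat_prime_neq_zero:
  assumes "CHAR('a::field) > 0" "prime l" "\<not> l dvd CHAR('a)"
  shows "(of_nat l :: 'a) \<noteq> 0"
proof
  assume "(of_nat l :: 'a) = 0"
  then have "CHAR('a) dvd l" by (simp add: of_nat_eq_0_iff_char_dvd)
  moreover have "prime CHAR('a)" using prime_CHAR_semidom assms(1) by blast
  ultimately have "CHAR('a) = l" using assms(2) unfolding prime_nat_iff by auto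
  then show False using assms(3) by simp
qed

lemma sum_power_diff_quotients_roots_of_unity:
  fixes \<zeta> y :: "'a::field"
  assumes l: "0 < l" and \<zeta>: "\<zeta> ^ l = 1" "\<forall>k. 0 < k \<and> k < l \<longrightarrow> \<zeta> ^ k \<noteq> 1"
  shows "(\<Sum>k<l. \<Sum>i<l. (\<zeta> ^ k) ^ (l - Suc i) * y ^ i) = of_nat l * y ^ (l - 1)"
proof -
  have orthogonality: "(\<Sum>k<l. (\<zeta> ^ (l - Suc i)) ^ k) = (if i = l - 1 then of_nat l else 0)"
    if i: "i < l" for i
  proof (cases "i = l - 1")
    case False
    then have "\<zeta> ^ (l - Suc i) \<noteq> 1" using \<zeta>(2) i by auto
    moreover have "(\<zeta> ^ (l - Suc i)) ^ l = 1" using \<zeta>(1) by (metis power_mult mult.commute power_one)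
    ultimately show ?thesis using False by (simp add: sum_gp_strict)
  qed simp
  have "(\<Sum>k<l. \<Sum>i<l. (\<zeta> ^ k) ^ (l - Suc i) * y ^ i)
      = (\<Sum>i<l. y ^ i * (\<Sum>k<l. (\<zeta> ^ (l - Suc i)) ^ k))"
    unfolding sum_distrib_left by (subst sum.swap) (simp add: mult.commute flip: power_mult)
  also have "\<dots> = (\<Sum>i<l. if i = l - 1 then y ^ i * of_nat l else 0)"
    by (rule sum.cong) (auto simp: orthogonality)
  finally show ?thesis using l by (simp add: mult.commute)
qed

locale subfield_carrier =
  fixes F :: "'a::field set"
  assumes is_subfield: "is_subfield F"
begin

lemma zero_closed[simp]: "0 \<in> F" and one_closed[simp]: "1 \<in> F"
  and add_closed[simp]: "x \<in> F \<Longrightarrow> y \<in> F \<Longrightarrow> x + y \<in> F"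
  and mult_closed[simp]: "x \<in> F \<Longrightarrow> y \<in> F \<Longrightarrow> x * y \<in> F"
  and uminus_closed[simp]: "x \<in> F \<Longrightarrow> - x \<in> F"
  and inverse_closed[simp]: "x \<in> F \<Longrightarrow> inverse x \<in> F"
  using is_subfield unfolding is_subfield_def by auto

lemma diff_closed[simp]: "x \<in> F \<Longrightarrow> y \<in> F \<Longrightarrow> x - y \<in> F"
  by (metis add_closed uminus_closed diff_conv_add_uminus)

lemma divide_closed[simp]: "x \<in> F \<Longrightarrow> y \<in> F \<Longrightarrow> x / y \<in> F"
  by (simp add: divide_inverse)

lemma power_closed[simp]: "x \<in> F \<Longrightarrow> x ^ n \<in> F"
  by (induction n) auto

lemma of_nat_closed[simp]: "of_nat n \<in> F"
  by (induction n) auto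

end

locale valued_field = subfield_carrier F for F :: "'a::field set" +
  fixes w :: "'a \<Rightarrow> int"
  assumes normalized_valuation: "normalized_valuation F w"
begin

lemma val_mult: "x \<in> F \<Longrightarrow> y \<in> F \<Longrightarrow> x \<noteq> 0 \<Longrightarrow> y \<noteq> 0 \<Longrightarrow> w (x * y) = w x + w y"
  using normalized_valuation unfolding normalized_valuation_def by auto

lemma val_add_ge_min:
  "x \<in> F \<Longrightarrow> y \<in> F \<Longrightarrow> x \<noteq> 0 \<Longrightarrow> y \<noteq> 0 \<Longrightarrow> x + y \<noteq> 0 \<Longrightarrow> min (w x) (w y) \<le> w (x + y)"
  using normalized_valuation unfolding normalized_valuation_def by auto

lemma val_surj: "w ` (F - {0}) = UNIV"
  using normalized_valuation unfolding normalized_valuation_def by auto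

lemma val_one[simp]: "w 1 = 0"
  using val_mult[of 1 1] by simp

lemma val_minus_one[simp]: "w (- 1) = 0"
  using val_mult[of "- 1" "- 1"] by simp

lemma val_minus[simp]: "x \<in> F \<Longrightarrow> w (- x) = w x"
  using val_mult[of "- 1" x] by (cases "x = 0") auto

lemma val_power: "x \<in> F \<Longrightarrow> x \<noteq> 0 \<Longrightarrow> w (x ^ n) = int n * w x"
  by (induction n) (auto simp: val_mult algebra_simps)

lemma val_inverse: "x \<in> F \<Longrightarrow> x \<noteq> 0 \<Longrightarrow> w (inverse x) = - w x"
  using val_mult[of x "inverse x"] by simp

lemma val_root_of_unity: "x \<in> F \<Longrightarrow> x ^ n = 1 \<Longrightarrow> 0 < n \<Longrightarrow> w x = 0"
  using val_power[of x n] by (cases "x = 0") (auto simp: power_0_left)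

lemma val_add_eq_of_less:
  assumes "x \<in> F" "y \<in> F" "x \<noteq> 0" "y \<noteq> 0" "x + y \<noteq> 0" "w x < w y"
  shows "w (x + y) = w x"
proof -
  have "min (w x) (w y) \<le> w (x + y)" using val_add_ge_min assms by blast
  moreover have "min (w (x + y)) (w (- y)) \<le> w ((x + y) + - y)"
    by (rule val_add_ge_min) (use assms in auto)
  ultimately show ?thesis using assms by auto
qed

lemma val_of_nat:
  assumes "CHAR('a) > 0" "(of_nat n :: 'a) \<noteq> 0"
  shows "w (of_nat n) = 0"
proof -
  define p where "p = CHAR('a)"
  have p: "prime p" using prime_CHAR_semidom assms(1) p_def by blast
  have "\<not> p dvd n" using assms(2) by (simp add: of_nat_eq_0_iff_char_dvd p_def)
  then have "[n ^ (p - 1) = 1] (mod p)" by (rule fermat_theorem[OF p])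
  then have "(of_nat n :: 'a) ^ (p - 1) = 1"
    by (metis of_nat_eq_iff_cong_CHAR of_nat_power of_nat_1 p_def)
  moreover have "0 < p - 1" using p prime_gt_1_nat by fastforce
  ultimately show ?thesis using val_root_of_unity by simp
qed

text \<open>\<open>val_ge x N\<close> says \<open>x \<in> \<mm>\<^sup>N\<close> (a fractional ideal for \<open>N < 0\<close>); the case \<open>x = 0\<close> is explicit
  because \<open>w 0\<close> is unconstrained.\<close>

definition val_ge :: "'a \<Rightarrow> int \<Rightarrow> bool" where
  "val_ge x N \<longleftrightarrow> x \<in> F \<and> (x = 0 \<or> N \<le> w x)"

lemma val_ge_zero[simp]: "val_ge 0 N"
  by (simp add: val_ge_def)

lemma val_ge_val: "x \<in> F \<Longrightarrow> val_ge x (w x)"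
  by (simp add: val_ge_def)

lemma val_ge_0_of_val_eq_0: "x \<in> F \<Longrightarrow> w x = 0 \<Longrightarrow> val_ge x 0"
  by (simp add: val_ge_def)

lemma val_ge_mono: "val_ge x N \<Longrightarrow> M \<le> N \<Longrightarrow> val_ge x M"
  by (auto simp: val_ge_def)

lemma val_ge_add: "val_ge x N \<Longrightarrow> val_ge y N \<Longrightarrow> val_ge (x + y) N"
  unfolding val_ge_def using val_add_ge_min[of x y] by fastforce

lemma val_ge_minus_iff[simp]: "val_ge (- x) N \<longleftrightarrow> val_ge x N"
proof -
  have "- x \<in> F \<longleftrightarrow> x \<in> F" using uminus_closed[of x] uminus_closed[of "- x"] by auto
  then show ?thesis by (auto simp: val_ge_def)
qed

lemma val_ge_diff: "val_ge x N \<Longrightarrow> val_ge y N \<Longrightarrow> val_ge (x - y) N"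
  using val_ge_add[of x N "- y"] by simp

lemma val_ge_diff_commute: "val_ge (x - y) N \<longleftrightarrow> val_ge (y - x) N"
  using val_ge_minus_iff[of "x - y" N] by simp

lemma val_ge_mult: "val_ge x N \<Longrightarrow> val_ge y M \<Longrightarrow> val_ge (x * y) (N + M)"
  by (cases "x = 0 \<or> y = 0") (auto simp: val_ge_def val_mult)

lemma val_ge_mult_integral: "val_ge x N \<Longrightarrow> val_ge y 0 \<Longrightarrow> val_ge (x * y) N"
  using val_ge_mult[of x N y 0] by simp

lemma val_ge_power: "val_ge x 0 \<Longrightarrow> val_ge (x ^ n) 0"
proof (induction n)
  case (Suc n)
  then show ?case using val_ge_mult[of x 0 "x ^ n" 0] by simp
qed (simp add: val_ge_def)

lemma val_ge_sum: "(\<And>i. i \<in> A \<Longrightarrow> val_ge (f i) N) \<Longrightarrow> val_ge (sum f A) N"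
  by (induction A rule: infinite_finite_induct) (auto intro: val_ge_add)

lemma val_ge_inverse_of_unit: "x \<in> F \<Longrightarrow> w x = 0 \<Longrightarrow> val_ge (inverse x) 0"
  by (cases "x = 0") (auto simp: val_ge_def val_inverse)

lemma val_ideal_iff_val_ge: "x \<in> val_ideal F w \<longleftrightarrow> val_ge x 1"
  by (auto simp: val_ideal_def val_ge_def)

lemma val_eq_of_close:
  assumes h: "h \<in> F" "h \<noteq> 0" and c: "c \<in> F" and close: "val_ge (h - c) (w h + 1)"
  shows "c \<noteq> 0 \<and> w c = w h"
proof (cases "c = h")
  case False
  then have less: "w h < w (c - h)"
    using close val_minus[of "h - c"] c h by (simp add: val_ge_def)
  then have "c \<noteq> 0" using h by auto
  moreover have "w (h + (c - h)) = w h"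
    by (rule val_add_eq_of_less) (use h c False \<open>c \<noteq> 0\<close> less in auto)
  ultimately show ?thesis by simp
qed (use h in simp)

lemma val_ge_power_diff:
  assumes "val_ge (x - y) N" "val_ge x 0" "val_ge y 0"
  shows "val_ge (x ^ n - y ^ n) N"
proof -
  have "x ^ n - y ^ n = (x - y) * (\<Sum>i<n. y ^ (n - Suc i) * x ^ i)"
    by (rule power_diff_sumr2)
  moreover have "val_ge (\<Sum>i<n. y ^ (n - Suc i) * x ^ i) 0"
    using assms by (auto intro!: val_ge_sum val_ge_mult_integral val_ge_power)
  ultimately show ?thesis using val_ge_mult_integral assms(1) by metis
qed

text \<open>The quotients \<open>(y\<^sup>l - 1) / (y - \<zeta>\<^sup>k)\<close> sum to \<open>l y\<^sup>l\<^sup>-\<^sup>1\<close>, a unit; so they cannot all lie in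
  \<open>\<mm>\<close>, i.e. some \<open>y - \<zeta>\<^sup>k\<close> is not a unit.\<close>

lemma root_of_unity_congruent:
  assumes l: "0 < l" "(of_nat l :: 'a) \<noteq> 0" "w (of_nat l) = 0"
    and \<zeta>: "\<zeta> \<in> F" "\<zeta> ^ l = 1" "\<forall>k. 0 < k \<and> k < l \<longrightarrow> \<zeta> ^ k \<noteq> 1"
    and y: "y \<in> F" "val_ge (y ^ l - 1) 1"
  shows "\<exists>k<l. val_ge (y - \<zeta> ^ k) 1"
proof (rule ccontr)
  assume far: "\<not> (\<exists>k<l. val_ge (y - \<zeta> ^ k) 1)"
  have y0: "y \<noteq> 0" using y l by (auto simp: val_ge_def power_0_left)
  have "val_ge (1 - y ^ l) (w 1 + 1)" using y(2) val_ge_diff_commute by simp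
  then have "w (y ^ l) = 0" using val_eq_of_close[of 1 "y ^ l"] y by simp
  then have wy: "w y = 0" using val_power[of y l] y y0 l by simp
  have wz: "w \<zeta> = 0" using val_root_of_unity \<zeta> l by blast
  define Q where "Q k = (\<Sum>i<l. (\<zeta> ^ k) ^ (l - Suc i) * y ^ i)" for k
  have Q_small: "val_ge (Q k) 1" if k: "k < l" for k
  proof -
    have "\<zeta> ^ k \<in> F" "val_ge (\<zeta> ^ k) 0" using \<zeta> wz by (auto intro: val_ge_power val_ge_0_of_val_eq_0)
    then have "val_ge (y - \<zeta> ^ k) 0" using y wy by (auto intro: val_ge_diff val_ge_0_of_val_eq_0)
    then have unit: "y - \<zeta> ^ k \<noteq> 0" "w (y - \<zeta> ^ k) = 0" using far k by (auto simp: val_ge_def)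
    have "(\<zeta> ^ k) ^ l = 1" using \<zeta>(2) by (metis power_mult mult.commute power_one)
    then have "y ^ l - 1 = (y - \<zeta> ^ k) * Q k"
      using power_diff_sumr2[of y l "\<zeta> ^ k"] Q_def by simp
    then have "Q k = (y ^ l - 1) * inverse (y - \<zeta> ^ k)" using unit by (simp add: field_simps)
    then show ?thesis using val_ge_mult_integral[OF y(2) val_ge_inverse_of_unit] unit \<open>\<zeta> ^ k \<in> F\<close> y
      by simp
  qed
  have "val_ge (\<Sum>k<l. Q k) 1" using Q_small by (intro val_ge_sum) simp
  moreover have "(\<Sum>k<l. Q k) = of_nat l * y ^ (l - 1)"
    unfolding Q_def by (rule sum_power_diff_quotients_roots_of_unity[OF l(1) \<zeta>(2,3)])
  moreover have "w (of_nat l * y ^ (l - 1)) = 0" "of_nat l * y ^ (l - 1) \<noteq> 0"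
    using val_mult[of "of_nat l" "y ^ (l - 1)"] val_power[of y] y y0 wy l by simp_all
  ultimately show False by (simp add: val_ge_def)
qed

definition adic_closure :: "'a set \<Rightarrow> 'a set" where
  "adic_closure K = {h \<in> F. \<forall>N. \<exists>c\<in>K. val_ge (h - c) N}"

context
  fixes K :: "'a set"
  assumes K: "subfield_carrier K" "K \<subseteq> F"
begin

interpretation K: subfield_carrier K by (rule K(1))

lemma subset_adic_closure: "K \<subseteq> adic_closure K"
  using K(2) by (force simp: adic_closure_def)

lemma adic_closure_add:
  assumes xy: "x \<in> adic_closure K" "y \<in> adic_closure K"
  shows "x + y \<in> adic_closure K"
proof -
  have "\<exists>c\<in>K. val_ge (x + y - c) N" for N
  proof -
    obtain c1 c2 where c: "c1 \<in> K" "c2 \<in> K" "val_ge (x - c1) N" "val_ge (y - c2) N"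
      using xy unfolding adic_closure_def by blast
    then have "val_ge ((x - c1) + (y - c2)) N" by (intro val_ge_add)
    then show ?thesis using c(1,2) by (intro bexI[of _ "c1 + c2"]) (auto simp: algebra_simps)
  qed
  then show ?thesis using xy unfolding adic_closure_def by auto
qed

lemma adic_closure_uminus:
  assumes x: "x \<in> adic_closure K"
  shows "- x \<in> adic_closure K"
proof -
  have "\<exists>c\<in>K. val_ge (- x - c) N" for N
  proof -
    obtain c where "c \<in> K" "val_ge (x - c) N" using x unfolding adic_closure_def by blast
    then show ?thesis using val_ge_diff_commute by (intro bexI[of _ "- c"]) auto
  qed
  then show ?thesis using x unfolding adic_closure_def by auto
qed

lemma adic_closure_mult:
  assumes xy: "x \<in> adic_closure K" "y \<in> adic_closure K"
  shows "x * y \<in> adic_closure K"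
proof (cases "x = 0 \<or> y = 0")
  case False
  have xyF: "x \<in> F" "y \<in> F" using xy unfolding adic_closure_def by auto
  have "\<exists>c\<in>K. val_ge (x * y - c) N" for N
  proof -
    obtain c2 where c2: "c2 \<in> K" "val_ge (y - c2) (max (N - w x) (w y + 1))"
      using xy(2) unfolding adic_closure_def by blast
    have c2F: "c2 \<in> F" using c2 K by auto
    have "w c2 = w y" using val_eq_of_close[OF xyF(2) _ c2F val_ge_mono[OF c2(2)]] False by simp
    moreover obtain c1 where c1: "c1 \<in> K" "val_ge (x - c1) (N - w y)"
      using xy(1) unfolding adic_closure_def by blast
    ultimately have "val_ge (c2 * (x - c1)) N" using val_ge_mult[OF val_ge_val[OF c2F] c1(2)] by simp
    moreover have "val_ge (x * (y - c2)) N"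
      using val_ge_mult[OF val_ge_val[OF xyF(1)] val_ge_mono[OF c2(2), of "N - w x"]] by simp
    moreover have "x * y - c1 * c2 = x * (y - c2) + c2 * (x - c1)" by (simp add: algebra_simps)
    ultimately have "val_ge (x * y - c1 * c2) N" by (metis val_ge_add)
    then show ?thesis using c1(1) c2(1) by (intro bexI[of _ "c1 * c2"]) simp_all
  qed
  then show ?thesis using xyF unfolding adic_closure_def by auto
qed (use subset_adic_closure in auto)

lemma adic_closure_inverse:
  assumes x: "x \<in> adic_closure K"
  shows "inverse x \<in> adic_closure K"
proof (cases "x = 0")
  case False
  have xF: "x \<in> F" using x unfolding adic_closure_def by auto
  have "\<exists>c\<in>K. val_ge (inverse x - c) N" for N
  proof -
    obtain c where c: "c \<in> K" "val_ge (x - c) (max (N + 2 * w x) (w x + 1))"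
      using x unfolding adic_closure_def by blast
    have cF: "c \<in> F" using c K by auto
    have c0: "c \<noteq> 0" and wc: "w c = w x"
      using val_eq_of_close[OF xF False cF val_ge_mono[OF c(2)]] by simp_all
    have "inverse x - inverse c = (c - x) * (inverse x * inverse c)"
      using c0 False by (simp add: field_simps)
    moreover have "val_ge (c - x) (N + 2 * w x)"
      using val_ge_mono[OF c(2), of "N + 2 * w x"] val_ge_diff_commute by simp
    moreover have "val_ge (inverse x * inverse c) (- 2 * w x)"
      using val_ge_mult[OF val_ge_val[of "inverse x"] val_ge_val[of "inverse c"]]
        val_inverse cF xF c0 False wc by simp
    ultimately have "val_ge (inverse x - inverse c) N"
      using val_ge_mult[of "c - x" "N + 2 * w x" "inverse x * inverse c" "- 2 * w x"] by simp
    then show ?thesis using c by (intro bexI[of _ "inverse c"]) auto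
  qed
  then show ?thesis using xF unfolding adic_closure_def by auto
qed (use subset_adic_closure in auto)

lemma is_subfield_adic_closure: "is_subfield (adic_closure K)"
  unfolding is_subfield_def
  by (simp add: adic_closure_add adic_closure_mult adic_closure_uminus adic_closure_inverse
      subsetD[OF subset_adic_closure])

text \<open>Newton's step \<open>s \<mapsto> s - (s\<^sup>l - y\<^sup>l) / (l s\<^sup>l\<^sup>-\<^sup>1)\<close> for the polynomial \<open>X\<^sup>l - y\<^sup>l\<close> over K; it
  doubles the precision, which is more than needed.\<close>

lemma newton_step:
  assumes l: "0 < l" "(of_nat l :: 'a) \<noteq> 0" "w (of_nat l) = 0"
    and y: "y \<in> F" "y ^ l \<in> K" "w y = 0" "y \<noteq> 0"
    and s: "s \<in> K" "val_ge (y - s) m" and m: "1 \<le> m"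
  shows "\<exists>s'\<in>K. val_ge (y - s') (m + 1)"
proof (cases "y = s")
  case False
  have sF: "s \<in> F" using s K by auto
  have "val_ge (y - s) (w y + 1)" using s m y val_ge_mono by simp
  then have s0: "s \<noteq> 0" and ws: "w s = 0" using val_eq_of_close[of y s] y sF by auto
  define L where "L = of_nat l * s ^ (l - 1)"
  have LK: "L \<in> K" unfolding L_def using s by simp
  have L0: "L \<noteq> 0" and wL: "w L = 0"
    unfolding L_def using val_mult[of "of_nat l" "s ^ (l - 1)"] val_power[of s] sF s0 ws l by simp_all
  define s' where "s' = s - (s ^ l - y ^ l) / L"
  define P where "P = (\<Sum>i<l. y ^ (l - Suc i) * s ^ i)"
  have "s ^ l - y ^ l = (s - y) * P" unfolding P_def by (rule power_diff_sumr2)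
  then have newton: "s' - y = (s - y) * (L - P) * inverse L"
    unfolding s'_def using L0 by (simp add: field_simps)
  have s_unit: "val_ge s 0" and y_unit: "val_ge y 0"
    using sF ws y by (simp_all add: val_ge_0_of_val_eq_0)
  have s_close: "val_ge (s - y) m" using s(2) val_ge_diff_commute by simp
  have "(\<Sum>i<l. s ^ i * s ^ (l - Suc i)) = (\<Sum>i<l. s ^ (l - 1))"
    by (rule sum.cong) (simp_all flip: power_add)
  then have "L = (\<Sum>i<l. s ^ i * s ^ (l - Suc i))" by (simp add: L_def)
  then have "L - P = (\<Sum>i<l. (s ^ (l - Suc i) - y ^ (l - Suc i)) * s ^ i)"
    unfolding P_def by (simp add: sum_subtractf[symmetric] algebra_simps)
  also have "val_ge \<dots> m"
    using val_ge_mult_integral[OF val_ge_power_diff[OF s_close s_unit y_unit] val_ge_power[OF s_unit]]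
    by (intro val_ge_sum)
  finally have "val_ge ((s - y) * (L - P) * inverse L) (m + m)"
    using val_ge_inverse_of_unit[of L] LK K(2) wL
    by (intro val_ge_mult_integral[OF val_ge_mult[OF s_close]]) auto
  then have "val_ge (y - s') (m + 1)"
    using val_ge_diff_commute[of s' y] val_ge_mono[of "s' - y" "m + m" "m + 1"] m newton by simp
  moreover have "s' \<in> K" unfolding s'_def using s y LK by simp
  ultimately show ?thesis by blast
qed (use s in \<open>auto intro: bexI[of _ s]\<close>)

lemma root_in_adic_closure:
  assumes l: "0 < l" "(of_nat l :: 'a) \<noteq> 0" "w (of_nat l) = 0"
    and y: "y \<in> F" "y ^ l \<in> K" "w y = 0" "y \<noteq> 0"
    and s: "s \<in> K" "val_ge (y - s) 1"
  shows "y \<in> adic_closure K"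
proof -
  have approx: "\<exists>c\<in>K. val_ge (y - c) (1 + int n)" for n
  proof (induction n)
    case (Suc n)
    then obtain c where "c \<in> K" "val_ge (y - c) (1 + int n)" by blast
    from newton_step[OF l y this] show ?case by (simp add: add.assoc)
  qed (use s in auto)
  have "\<exists>c\<in>K. val_ge (y - c) N" for N
  proof -
    obtain c where "c \<in> K" "val_ge (y - c) (1 + int (nat N))" using approx by blast
    moreover have "N \<le> 1 + int (nat N)" by simp
    ultimately show ?thesis using val_ge_mono by blast
  qed
  then show ?thesis using y unfolding adic_closure_def by blast
qed

lemma kummer_root_in_adic_closure:
  assumes l: "0 < l" "(of_nat l :: 'a) \<noteq> 0" "w (of_nat l) = 0"
    and \<zeta>: "\<zeta> \<in> K" "\<zeta> ^ l = 1" "\<forall>k. 0 < k \<and> k < l \<longrightarrow> \<zeta> ^ k \<noteq> 1"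
    and y: "y \<in> F" "y ^ l = 1 + u" "u \<in> K" "val_ge u 1"
  shows "y \<in> adic_closure K"
proof -
  have "u \<noteq> - 1" using y(4) by (auto simp: val_ge_def)
  then have "1 + u \<noteq> 0" by (metis add.commute eq_neg_iff_add_eq_0)
  then have y0: "y \<noteq> 0" using y(2) l by (auto simp: power_0_left)
  have "val_ge (1 - y ^ l) (w 1 + 1)" using y(2,4) by simp
  then have "w (y ^ l) = 0" using val_eq_of_close[of 1 "y ^ l"] y K by auto
  then have wy: "w y = 0" using val_power[of y l] y y0 l by simp
  obtain k where "val_ge (y - \<zeta> ^ k) 1"
    using root_of_unity_congruent[OF l _ \<zeta>(2,3) y(1)] \<zeta>(1) K(2) y(2,4) by auto
  then show ?thesis using root_in_adic_closure[OF l y(1) _ wy y0, of "\<zeta> ^ k"] \<zeta>(1) y(2,3) by simp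
qed

lemma unramified_of_adic_closure:
  assumes dense: "F \<subseteq> adic_closure K" and above: "lies_above F w K v"
  shows "\<forall>y\<in>K - {0}. w y = v y"
proof -
  obtain e where e: "0 < e" "\<forall>y\<in>K - {0}. w y = e * v y"
    using above unfolding lies_above_def by blast
  have "1 \<in> w ` (F - {0})" using val_surj by simp
  then obtain h where h: "h \<in> F" "h \<noteq> 0" "w h = 1" by force
  then obtain c where c: "c \<in> K" "val_ge (h - c) (w h + 1)"
    using dense unfolding adic_closure_def by blast
  then have "c \<noteq> 0" "w c = 1" using val_eq_of_close[of h c] h K(2) by auto
  then have "e = 1" using e c pos_zmult_eq_1_iff by auto
  then show ?thesis using e by simp
qed

lemma residue_is_power_of_adic_closure:
  assumes dense: "F \<subseteq> adic_closure K" and unram: "\<forall>y\<in>K - {0}. w y = v y"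
    and a: "a \<in> K" and power: "residue_is_power F w l a"
  shows "residue_is_power K v l a"
proof -
  obtain b where "b \<in> val_ring F w" "\<not> val_ge b 1" and b_close: "val_ge (b ^ l - a) 1"
    using power unfolding residue_is_power_def val_ideal_iff_val_ge by blast
  then have b: "b \<in> F" "b \<noteq> 0" "w b = 0" by (auto simp: val_ring_def val_ge_def)
  obtain c where c: "c \<in> K" "val_ge (b - c) (w b + 1)"
    using dense b unfolding adic_closure_def by blast
  have cF: "c \<in> F" using c K by auto
  then have c0: "c \<noteq> 0" and wc: "w c = 0" using val_eq_of_close[of b c] b c by auto
  have "val_ge (c ^ l - b ^ l) 1"
  proof (rule val_ge_power_diff)
    show "val_ge (c - b) 1" using c(2) b(3) val_ge_diff_commute by simp
    show "val_ge c 0" "val_ge b 0" using cF wc b by (simp_all add: val_ge_0_of_val_eq_0)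
  qed
  then have "val_ge (c ^ l - a) 1" using val_ge_add[OF _ b_close] by fastforce
  moreover have "c ^ l - a \<in> K" using c a by simp
  ultimately have "c ^ l - a \<in> val_ideal K v"
    using unram by (cases "c ^ l - a = 0") (auto simp: val_ge_def val_ideal_def)
  moreover have "c \<in> val_ring K v" "c \<notin> val_ideal K v"
    using unram c(1) c0 wc by (auto simp: val_ring_def val_ideal_def)
  ultimately show ?thesis unfolding residue_is_power_def by blast
qed

end

end

lemma (in valued_field) val_ge_one_of_lies_above:
  assumes "lies_above F w K v" "K \<subseteq> F" "u \<in> K" "u \<noteq> 0" "1 \<le> v u"
  shows "val_ge u 1"
proof -
  obtain e where "0 < e" "w u = e * v u" using assms(1,3,4) unfolding lies_above_def by blast
  then have "1 \<le> w u" using assms(5) mult_mono[of 1 e 1 "v u"] by simp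
  then show ?thesis using assms(2,3) by (auto simp: val_ge_def)
qed

lemma (in valued_field) val_add_inverse_nonneg:
  assumes "x \<in> F" "x \<noteq> 0" "w x = 0" "x + inverse x \<noteq> 0"
  shows "0 \<le> w (x + inverse x)"
  using val_add_ge_min[of x "inverse x"] val_inverse assms by simp

theorem lemma3p6:
  fixes K H :: "'a::field set" and l :: nat and \<zeta> x d a \<alpha> \<beta> \<gamma> :: 'a
    and v w :: "'a \<Rightarrow> int"
  assumes K: "global_function_field K"
    and l: "prime l" "\<not> l dvd CHAR('a)"
    and zeta: "\<zeta> \<in> K" "\<zeta> ^ l = 1" "\<forall>k. 0 < k \<and> k < l \<longrightarrow> \<zeta> ^ k \<noteq> 1"
    and xda: "x \<in> K - {0}" "d \<in> K - {0}" "a \<in> K - {0}"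
    and nz: "d * x ^ l + d ^ l \<noteq> 0" "a + inverse a \<noteq> 0"
    and roots: "\<alpha> ^ l = 1 + inverse d"
               "\<beta> ^ l = 1 + inverse (d * x ^ l + d ^ l)"
               "\<gamma> ^ l = 1 + (a + inverse a) * inverse d"
    and H: "H = gen_subfield (K \<union> {\<alpha>, \<beta>, \<gamma>})"
    and p: "normalized_valuation K v"
    and i: "v d < 0"
    and ii: "v (d * x ^ l) < v (d ^ l)"
    and iii: "v a = 0" "\<not> residue_is_power K v l a"
    and iv: "\<not> int l dvd v d"
    and q: "normalized_valuation H w" "lies_above H w K v"
  shows "\<not> int l dvd w (d * x ^ l + d ^ l) \<and> \<not> residue_is_power H w l a"
proof -
  have char: "CHAR('a) > 0" and "is_subfield K" using K unfolding global_function_field_def by auto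
  interpret K: valued_field K v using \<open>is_subfield K\<close> p by unfold_locales
  interpret H: valued_field H w using gen_subfield_is_subfield q(1) unfolding H by unfold_locales
  have KH: "K \<subseteq> H" and gens: "\<alpha> \<in> H" "\<beta> \<in> H" "\<gamma> \<in> H"
    using gen_subfield_superset[of "K \<union> {\<alpha>, \<beta>, \<gamma>}"] unfolding H by auto
  have l_pos: "0 < l" and l_nz: "(of_nat l :: 'a) \<noteq> 0"
    using prime_gt_0_nat of_nat_prime_neq_zero[OF char l] l by auto
  have kummer: "y \<in> H.adic_closure K" if "y \<in> H" "y ^ l = 1 + u" "u \<in> K" "u \<noteq> 0" "1 \<le> v u" for y u
    using H.kummer_root_in_adic_closure[OF K.subfield_carrier_axioms KH l_pos l_nz
        H.val_of_nat[OF char l_nz] zeta that(1-3) H.val_ge_one_of_lies_above[OF q(2) KH that(3-5)]] .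
  have d: "d \<in> K" "d \<noteq> 0" and x: "x \<in> K" "x \<noteq> 0" and a: "a \<in> K" "a \<noteq> 0" using xda by auto
  define D where "D = d * x ^ l + d ^ l"
  have D: "D \<in> K" "D \<noteq> 0" using d x nz(1) by (simp_all add: D_def)
  have vD: "v D = v d + int l * v x"
    using K.val_add_eq_of_less[of "d * x ^ l" "d ^ l"] ii nz(1) d x
    by (simp add: D_def K.val_mult K.val_power)
  have "int l * v d < 0" using i l_pos by (simp add: mult_pos_neg)
  then have "v D < 0" using vD ii d x by (simp add: K.val_mult K.val_power)
  have "0 \<le> v (a + inverse a)" using K.val_add_inverse_nonneg a iii(1) nz(2) by blast
  have "\<alpha> \<in> H.adic_closure K"
    by (rule kummer[OF gens(1) roots(1)]) (use i d in \<open>simp_all add: K.val_inverse\<close>)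
  moreover have "\<beta> \<in> H.adic_closure K"
    by (rule kummer[OF gens(2) roots(2)[folded D_def]])
      (use \<open>v D < 0\<close> D in \<open>simp_all add: K.val_inverse\<close>)
  moreover have "\<gamma> \<in> H.adic_closure K"
    by (rule kummer[OF gens(3) roots(3)])
      (use \<open>0 \<le> v (a + inverse a)\<close> i d a nz(2) in \<open>simp_all add: K.val_inverse K.val_mult\<close>)
  ultimately have dense: "H \<subseteq> H.adic_closure K"
    using gen_subfield_least[OF H.is_subfield_adic_closure[OF K.subfield_carrier_axioms KH],
        of "K \<union> {\<alpha>, \<beta>, \<gamma>}", folded H] H.subset_adic_closure[OF K.subfield_carrier_axioms KH]
    by blast
  have unram: "\<forall>y\<in>K - {0}. w y = v y"
    by (rule H.unramified_of_adic_closure[OF K.subfield_carrier_axioms KH dense q(2)])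
  have "w D = v D" using unram D by blast
  then have "\<not> int l dvd w D" using vD iv by (simp add: dvd_add_left_iff)
  moreover have "\<not> residue_is_power H w l a"
    using H.residue_is_power_of_adic_closure[OF K.subfield_carrier_axioms KH dense unram a(1)] iii(2)
    by blast
  ultimately show ?thesis unfolding D_def by blast
qed

end
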